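(* Let $\rho,\delta>0$, $f\in A_\rho(\mathbb{C}^\ell,\mathbb{C}^d)$, and let $E=A_\delta(\mathbb{C}^m,\mathbb{C}^\ell)$, $F=A_\delta(\mathbb{C}^m,\mathbb{C}^d)$. Let $E(\rho)=\{g\in E:\|g\|_\delta\le\rho\}$. Then the operator $\mathcal{C}_f:E(\rho)\to F$, $\mathcal{C}_f(g)=f\circ g$, is well defined and analytic in the sense that $\mathcal{C}_f\in A_\rho(E,F)$; moreover $\|\mathcal{C}_f\|_{A_\rho(E,F)}\le\|f\|_\rho$.
   Context: Sup norm $\|\eta\|_\infty=\max_i|\eta_i|$ on $\mathbb{C}^s$; $\mathbb{C}^r(\rho)=\{z:\|z\|_\infty\le\rho\}$; multi-index notation $z^\alpha$, $|\alpha|$. For $\rho>0$, $A_\rho(\mathbb{C}^r,\mathbb{C}^s)$ is the Banach space of $f:\mathbb{C}^r(\rho)\to\mathbb{C}^s$, $f(z)=\sum_{k\ge0}\sum_{|\alpha|=k}z^\alpha\eta_\alpha$ with norm $\|f\|_\rho=\sum_{k\ge0}(\sum_{|\alpha|=k}\|\eta_\alpha\|_\infty)\rho^k<\infty$. For Banach spaces $E,F$, $\mathcal{S}_k(E,F)$ denotes bounded symmetric $k$-linear maps $E^k\to F$; here it is normed by $\|b\|=\sup\{\|b(g_1,\ldots,g_k)\|_F:\|g_1\|_E=\cdots=\|g_k\|_E=1\}$. $A_\rho(E,F)$ denotes the space of maps $\Psi$ on the closed ball $E(\rho)$ of the form $\Psi(x)=\sum_{k\ge0}b_k(x,\ldots,x)$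 with $b_k\in\mathcal{S}_k(E,F)$ and $\|\Psi\|_{A_\rho(E,F)}=\sum_k\|b_k\|\rho^k<\infty$. *)

theory Defs
  imports "HOL-Analysis.Analysis" "HOL-Library.Function_Algebras"
begin

text \<open>Vectors of C^s are represented as complex^'s (s = CARD('s)); multi-indices
as functions 'r \<Rightarrow> nat.  An element of A_rho(C^r,C^s) is represented by its
family of coefficients eta_alpha.\<close>

definition supn :: "complex^'n::finite \<Rightarrow> real" where
  "supn x = (MAX i. norm (x $ i))"

definition deg :: "('r::finite \<Rightarrow> nat) \<Rightarrow> nat" where
  "deg \<alpha> = (\<Sum>i\<in>UNIV. \<alpha> i)"

definition zpow :: "complex^'r::finite \<Rightarrow> ('r \<Rightarrow> nat) \<Rightarrow> complex" where
  "zpow z \<alpha> = (\<Prod>i\<in>UNIV. (z $ i) ^ (\<alpha> i))"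

text \<open>membership in A_rho (finite norm) and the norm
  \<open>\<Sum>_k (\<Sum>_{|\<alpha>|=k} |eta_\<alpha>|_inf) rho^k\<close>\<close>
definition inA :: "real \<Rightarrow> (('r::finite \<Rightarrow> nat) \<Rightarrow> complex^'s::finite) \<Rightarrow> bool" where
  "inA \<rho> c \<longleftrightarrow> (\<lambda>\<alpha>. supn (c \<alpha>) * \<rho> ^ deg \<alpha>) summable_on UNIV"

definition Anorm :: "real \<Rightarrow> (('r::finite \<Rightarrow> nat) \<Rightarrow> complex^'s::finite) \<Rightarrow> real" where
  "Anorm \<rho> c = (\<Sum>\<^sub>\<infinity>\<alpha>. supn (c \<alpha>) * \<rho> ^ deg \<alpha>)"

text \<open>the function z \<mapsto> \<Sum>_\<alpha> z^\<alpha> eta_\<alpha> (meaningful on the closed polydisc)\<close>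
definition evalA :: "(('r::finite \<Rightarrow> nat) \<Rightarrow> complex^'s::finite) \<Rightarrow> complex^'r \<Rightarrow> complex^'s" where
  "evalA c z = (\<Sum>\<^sub>\<infinity>\<alpha>. zpow z \<alpha> *s c \<alpha>)"

definition smultA :: "complex \<Rightarrow> (('r \<Rightarrow> nat) \<Rightarrow> complex^'s::finite) \<Rightarrow> (('r \<Rightarrow> nat) \<Rightarrow> complex^'s)" where
  "smultA a c = (\<lambda>\<alpha>. a *s c \<alpha>)"

text \<open>the set whose supremum is the norm of a k-linear map b : E^k \<rightarrow> F, E = A_delta(C^m,C^l),
  F = A_delta(C^m,C^d); arguments of b are lists of length k\<close>
definition mlset :: "real \<Rightarrow> nat \<Rightarrow>
   ((('m::finite \<Rightarrow> nat) \<Rightarrow> complex^'l::finite) list \<Rightarrow> (('m \<Rightarrow> nat) \<Rightarrow> complex^'d::finite)) \<Rightarrow> real set" where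
  "mlset \<delta> k b = {Anorm \<delta> (b gs) | gs. length gs = k \<and> (\<forall>g\<in>set gs. inA \<delta> g \<and> Anorm \<delta> g = 1)}"

definition mlnorm :: "real \<Rightarrow> nat \<Rightarrow>
   ((('m::finite \<Rightarrow> nat) \<Rightarrow> complex^'l::finite) list \<Rightarrow> (('m \<Rightarrow> nat) \<Rightarrow> complex^'d::finite)) \<Rightarrow> real" where
  "mlnorm \<delta> k b = Sup (mlset \<delta> k b)"

definition sym_mlin :: "real \<Rightarrow> nat \<Rightarrow>
   ((('m::finite \<Rightarrow> nat) \<Rightarrow> complex^'l::finite) list \<Rightarrow> (('m \<Rightarrow> nat) \<Rightarrow> complex^'d::finite)) \<Rightarrow> bool" where
  "sym_mlin \<delta> k b \<longleftrightarrow>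
     (\<forall>gs. length gs = k \<and> (\<forall>g\<in>set gs. inA \<delta> g) \<longrightarrow> inA \<delta> (b gs)) \<and>
     (\<forall>gs hs. length gs = k \<and> (\<forall>g\<in>set gs. inA \<delta> g) \<and> mset gs = mset hs \<longrightarrow> b gs = b hs) \<and>
     (\<forall>xs ys u v a. length xs + length ys + 1 = k \<and> (\<forall>g\<in>set (xs @ ys). inA \<delta> g) \<and> inA \<delta> u \<and> inA \<delta> v \<longrightarrow>
         b (xs @ (u + smultA a v) # ys) = b (xs @ u # ys) + smultA a (b (xs @ v # ys))) \<and>
     bdd_above (mlset \<delta> k b)"

end

theory Submission
  imports Defs "HOL-Combinatorics.Permutations"
begin

(* For a list gs = [g_1,...,g_k] of elements of E = A_\<delta>(C^m,C^l) we define the symmetric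
   k-linear operator comp_op f k, the polarisation of the homogeneous degree-k part of f:
     comp_op f k gs = \<Sum>_{t : {0..<k} \<rightarrow> l} (g_1)_{t 0} \<star> ... \<star> (g_k)_{t (k-1)} \<cdot> f_{letters t} / #(fibre)
   where \<star> is the Cauchy product of coefficient families and letters t \<in> N^l counts the letters
   of the word t.
   The theorem follows: h = \<Sum>_k comp_op f k [g,...,g] lies in A_\<delta>, represents f \<circ> g, and
   \<Sum>_k \<parallel>comp_op f k\<parallel> \<rho>^k \<le> \<Sum>_k (\<Sum>_{|\<alpha>|=k} |f_\<alpha>|) \<rho>^k = \<parallel>f\<parallel>_\<rho>. *)

lemma sum_fun_apply: "(\<Sum>j\<in>A. f j) x = (\<Sum>j\<in>A. f j x)"
  by (induction A rule: infinite_finite_induct) auto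

lemma supn_ge: "norm (x $ i) \<le> supn x"
  unfolding supn_def by (rule Max_ge) auto

lemma supn_le: "(\<And>i. norm (x $ i) \<le> C) \<Longrightarrow> supn x \<le> C"
  unfolding supn_def by (subst Max_le_iff) auto

lemma supn_nonneg: "0 \<le> supn x"
  using supn_ge[of x undefined] norm_ge_zero order_trans by blast

lemma supn_add: "supn (x + y) \<le> supn x + supn y"
  by (rule supn_le) (metis vector_add_component norm_triangle_ineq add_mono supn_ge order_trans)

lemma supn_smult: "supn (a *s x) = norm a * supn x"
proof (rule antisym)
  show "supn (a *s x) \<le> norm a * supn x"
    by (rule supn_le) (simp add: norm_mult mult_left_mono supn_ge)
  have "supn x \<in> range (\<lambda>i. norm (x $ i))"
    unfolding supn_def by (rule Max_in) auto
  then obtain i where i: "supn x = norm (x $ i)" by auto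
  have "norm ((a *s x) $ i) \<le> supn (a *s x)" by (rule supn_ge)
  then show "norm a * supn x \<le> supn (a *s x)" by (simp add: i norm_mult)
qed

lemma supn_scaleR: "supn (r *\<^sub>R x) = \<bar>r\<bar> * supn (x :: complex^'n::finite)"
proof -
  have "r *\<^sub>R x = complex_of_real r *s x" by (simp add: vec_eq_iff) (simp add: scaleR_conv_of_real)
  then show ?thesis by (simp add: supn_smult)
qed

lemma supn_zero [simp]: "supn 0 = 0"
  by (simp add: supn_def)

lemma supn_sum: "supn (\<Sum>t\<in>T. f t) \<le> (\<Sum>t\<in>T. supn (f t))"
  by (induction T rule: infinite_finite_induct) (auto intro: order_trans[OF supn_add])

lemma norm_le_supn: "norm (x :: complex^'n::finite) \<le> of_nat CARD('n) * supn x"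
proof -
  have "norm x \<le> (\<Sum>i\<in>UNIV. norm (x $ i))" unfolding norm_vec_def by (rule L2_set_le_sum) auto
  also have "\<dots> \<le> (\<Sum>i\<in>(UNIV::'n set). supn x)" by (rule sum_mono) (rule supn_ge)
  finally show ?thesis by simp
qed

lemma zpow_add: "zpow z (\<alpha> + \<beta>) = zpow z \<alpha> * zpow z \<beta>"
  unfolding zpow_def by (simp add: power_add prod.distrib)

lemma zpow_sum: "zpow z (\<Sum>j\<in>A. \<gamma> j) = (\<Prod>j\<in>A. zpow z (\<gamma> j))"
proof (induction A rule: infinite_finite_induct)
  case (insert x F)
  have "zpow z (sum \<gamma> (insert x F)) = zpow z (\<gamma> x + sum \<gamma> F)" using insert by (metis sum.insert)
  also have "\<dots> = zpow z (\<gamma> x) * zpow z (sum \<gamma> F)" by (rule zpow_add)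
  finally show ?case using insert by (metis prod.insert sum.insert)
qed (auto simp: zpow_def)

lemma deg_add: "deg (\<alpha> + \<beta>) = deg \<alpha> + deg \<beta>"
  unfolding deg_def by (simp add: sum.distrib)

lemma deg_zero [simp]: "deg 0 = 0"
  unfolding deg_def by simp

lemma deg_sum: "deg (\<Sum>j\<in>A. \<gamma> j) = (\<Sum>j\<in>A. deg (\<gamma> j))"
proof (induction A rule: infinite_finite_induct)
  case (insert x F)
  have "deg (sum \<gamma> (insert x F)) = deg (\<gamma> x + sum \<gamma> F)" using insert by (metis sum.insert)
  also have "\<dots> = deg (\<gamma> x) + deg (sum \<gamma> F)" by (rule deg_add)
  finally show ?case using insert by (metis sum.insert)
qed (auto simp: deg_def)

lemma norm_zpow: "supn z \<le> d \<Longrightarrow> norm (zpow z \<alpha>) \<le> d ^ deg \<alpha>"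
proof -
  assume z: "supn z \<le> d"
  have "norm (zpow z \<alpha>) = (\<Prod>i\<in>UNIV. norm (z $ i) ^ \<alpha> i)"
    unfolding zpow_def by (simp add: prod_norm[symmetric] norm_power)
  also have "\<dots> \<le> (\<Prod>i\<in>UNIV. d ^ \<alpha> i)"
    by (rule prod_mono) (auto intro: power_mono order_trans[OF supn_ge z])
  also have "\<dots> = d ^ deg \<alpha>" unfolding deg_def by (simp add: power_sum)
  finally show ?thesis .
qed

lemma Anorm_nonneg: "0 \<le> d \<Longrightarrow> 0 \<le> Anorm d g"
  unfolding Anorm_def by (rule infsum_nonneg) (simp add: supn_nonneg)

lemma has_sum_Anorm: "inA d g \<Longrightarrow> ((\<lambda>\<beta>. supn (g \<beta>) * d ^ deg \<beta>) has_sum Anorm d g) UNIV"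
  unfolding inA_def Anorm_def by (rule has_sum_infsum)

section \<open>Cauchy products of coefficient families\<close>

definition splits :: "nat \<Rightarrow> ('m::finite \<Rightarrow> nat) \<Rightarrow> (nat \<Rightarrow> 'm \<Rightarrow> nat) set" where
  "splits k \<beta> = {\<gamma> \<in> PiE {..<k} (\<lambda>_. UNIV). (\<Sum>j<k. \<gamma> j) = \<beta>}"

lemma finite_splits: fixes \<beta> :: "'m::finite \<Rightarrow> nat" shows "finite (splits k \<beta>)"
proof -
  have "splits k \<beta> \<subseteq> PiE {..<k} (\<lambda>_. PiE UNIV (\<lambda>i. {..\<beta> i}))"
  proof
    fix \<gamma> assume g: "\<gamma> \<in> splits k \<beta>"
    have "\<gamma> j i \<le> \<beta> i" if "j < k" for j i
    proof -
      have "\<beta> i = (\<Sum>j'<k. \<gamma> j' i)" using g by (auto simp: splits_def sum_fun_apply[symmetric])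
      also have "\<dots> \<ge> \<gamma> j i" by (rule member_le_sum) (use that in auto)
      finally show ?thesis .
    qed
    then show "\<gamma> \<in> PiE {..<k} (\<lambda>_. PiE UNIV (\<lambda>i. {..\<beta> i}))"
      using g by (auto simp: splits_def PiE_def Pi_def extensional_def)
  qed
  moreover have "finite (PiE {..<k} (\<lambda>_. PiE (UNIV::'m set) (\<lambda>i. {..\<beta> i})))"
    by (intro finite_PiE) auto
  ultimately show ?thesis by (rule finite_subset)
qed

lemma summable_on_PiE_prod:
  fixes a :: "'i \<Rightarrow> 'b \<Rightarrow> real"
  assumes A: "finite A" and nn: "\<And>j x. 0 \<le> a j x" and s: "\<And>j. j\<in>A \<Longrightarrow> a j summable_on UNIV"
  shows "(\<lambda>p. \<Prod>j\<in>A. a j (p j)) summable_on PiE A (\<lambda>_. UNIV)"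
proof (rule nonneg_bdd_above_summable_on)
  show "0 \<le> (\<Prod>j\<in>A. a j (p j))" for p by (rule prod_nonneg) (use nn in auto)
  show "bdd_above (sum (\<lambda>p. \<Prod>j\<in>A. a j (p j)) ` {F. F \<subseteq> PiE A (\<lambda>_. UNIV) \<and> finite F})"
  proof (rule bdd_aboveI2)
    fix F :: "('i \<Rightarrow> 'b) set" assume F: "F \<in> {F. F \<subseteq> PiE A (\<lambda>_. UNIV) \<and> finite F}"
    define B where "B j = (\<lambda>p. p j) ` F" for j
    have fB: "finite (B j)" for j using F by (auto simp: B_def)
    have sub: "F \<subseteq> PiE A B" using F by (auto simp: B_def PiE_def Pi_def)
    have "(\<Sum>p\<in>F. \<Prod>j\<in>A. a j (p j)) \<le> (\<Sum>p\<in>PiE A B. \<Prod>j\<in>A. a j (p j))"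
      by (rule sum_mono2) (use sub fB A in \<open>auto intro!: finite_PiE prod_nonneg nn\<close>)
    also have "\<dots> = (\<Prod>j\<in>A. \<Sum>y\<in>B j. a j y)"
      by (rule prod_sum_PiE[symmetric]) (use A fB in auto)
    also have "\<dots> \<le> (\<Prod>j\<in>A. \<Sum>\<^sub>\<infinity>y. a j y)"
      by (rule prod_mono) (use fB s nn in \<open>auto intro!: sum_nonneg finite_sum_le_infsum\<close>)
    finally show "(\<Sum>p\<in>F. \<Prod>j\<in>A. a j (p j)) \<le> (\<Prod>j\<in>A. \<Sum>\<^sub>\<infinity>y. a j y)" .
  qed
qed

lemma has_sum_cauchy_product:
  fixes a :: "nat \<Rightarrow> ('m::finite \<Rightarrow> nat) \<Rightarrow> 'c::{banach, real_normed_field, uniform_topological_group_add}"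
  assumes s: "\<And>j. j<k \<Longrightarrow> (\<lambda>\<gamma>. norm (a j \<gamma>)) summable_on UNIV"
  shows "((\<lambda>\<beta>. \<Sum>\<gamma>\<in>splits k \<beta>. \<Prod>j<k. a j (\<gamma> j)) has_sum (\<Prod>j<k. \<Sum>\<^sub>\<infinity>\<gamma>. a j \<gamma>)) UNIV"
proof -
  let ?P = "PiE {..<k} (\<lambda>_. UNIV :: ('m\<Rightarrow>nat) set)"
  have "(\<lambda>p. norm (\<Prod>j<k. a j (p j))) summable_on ?P"
    using summable_on_PiE_prod[of "{..<k}" "\<lambda>j x. norm (a j x)"] s by (simp add: prod_norm)
  hence summ: "(\<lambda>p. \<Prod>j<k. a j (p j)) summable_on ?P" by (rule abs_summable_summable)
  have val: "(\<Sum>\<^sub>\<infinity>p\<in>?P. \<Prod>j<k. a j (p j)) = (\<Prod>j<k. \<Sum>\<^sub>\<infinity>\<gamma>. a j \<gamma>)"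
    by (rule infsum_prod_PiE_abs) (use s in auto)
  have hs: "((\<lambda>p. \<Prod>j<k. a j (p j)) has_sum (\<Prod>j<k. \<Sum>\<^sub>\<infinity>\<gamma>. a j \<gamma>)) ?P"
    using has_sum_infsum[OF summ] unfolding val .
  define g where "g p = ((\<Sum>j<k. p j), p)" for p :: "nat \<Rightarrow> 'm \<Rightarrow> nat"
  have bij: "bij_betw g ?P (Sigma UNIV (splits k))"
    by (rule bij_betwI[where g = snd]) (auto simp: g_def splits_def)
  have "((\<lambda>(\<beta>,\<gamma>). \<Prod>j<k. a j (\<gamma> j)) has_sum (\<Prod>j<k. \<Sum>\<^sub>\<infinity>\<gamma>. a j \<gamma>)) (Sigma UNIV (splits k))"
    using has_sum_reindex_bij_betw[OF bij, of "\<lambda>(\<beta>,\<gamma>). \<Prod>j<k. a j (\<gamma> j)"] hs by (simp add: g_def)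
  then show ?thesis
  proof (rule has_sum_Sigma')
    fix x :: "'m \<Rightarrow> nat"
    show "((\<lambda>y. (\<lambda>(\<beta>,\<gamma>). \<Prod>j<k. a j (\<gamma> j)) (x,y)) has_sum (\<Sum>\<gamma>\<in>splits k x. \<Prod>j<k. a j (\<gamma> j))) (splits k x)"
      using has_sum_finite[OF finite_splits, of "\<lambda>\<gamma>. \<Prod>j<k. a j (\<gamma> j)" k x] by simp
  qed
qed

definition conv :: "nat \<Rightarrow> (nat \<Rightarrow> ('m::finite \<Rightarrow> nat) \<Rightarrow> complex) \<Rightarrow> ('m \<Rightarrow> nat) \<Rightarrow> complex" where
  "conv k p \<beta> = (\<Sum>\<gamma>\<in>splits k \<beta>. \<Prod>j<k. p j (\<gamma> j))"

definition snorm :: "real \<Rightarrow> (('m::finite \<Rightarrow> nat) \<Rightarrow> complex) \<Rightarrow> real" where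
  "snorm d p = (\<Sum>\<^sub>\<infinity>\<beta>. norm (p \<beta>) * d ^ deg \<beta>)"

definition sinA :: "real \<Rightarrow> (('m::finite \<Rightarrow> nat) \<Rightarrow> complex) \<Rightarrow> bool" where
  "sinA d p \<longleftrightarrow> (\<lambda>\<beta>. norm (p \<beta>) * d ^ deg \<beta>) summable_on UNIV"

lemma snorm_nonneg: "0 \<le> d \<Longrightarrow> 0 \<le> snorm d p"
  unfolding snorm_def by (rule infsum_nonneg) simp

lemma has_sum_eval_conv:
  assumes s: "\<And>j. j<k \<Longrightarrow> (\<lambda>\<gamma>. norm (zpow z \<gamma> * p j \<gamma>)) summable_on UNIV"
  shows "((\<lambda>\<beta>. zpow z \<beta> * conv k p \<beta>) has_sum (\<Prod>j<k. \<Sum>\<^sub>\<infinity>\<gamma>. zpow z \<gamma> * p j \<gamma>)) UNIV"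
proof -
  have "((\<lambda>\<beta>. \<Sum>\<gamma>\<in>splits k \<beta>. \<Prod>j<k. zpow z (\<gamma> j) * p j (\<gamma> j)) has_sum (\<Prod>j<k. \<Sum>\<^sub>\<infinity>\<gamma>. zpow z \<gamma> * p j \<gamma>)) UNIV"
    by (rule has_sum_cauchy_product) (use s in auto)
  moreover have "(\<Sum>\<gamma>\<in>splits k \<beta>. \<Prod>j<k. zpow z (\<gamma> j) * p j (\<gamma> j)) = zpow z \<beta> * conv k p \<beta>" for \<beta>
    unfolding conv_def sum_distrib_left
    by (rule sum.cong) (auto simp: splits_def prod.distrib zpow_sum[symmetric])
  ultimately show ?thesis by simp
qed

lemma conv_bound:
  assumes d: "0 \<le> d" and s: "\<And>j. j<k \<Longrightarrow> sinA d (p j)"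
  shows "sinA d (conv k p)" "snorm d (conv k p) \<le> (\<Prod>j<k. snorm d (p j))"
proof -
  have hs: "((\<lambda>\<beta>. \<Sum>\<gamma>\<in>splits k \<beta>. \<Prod>j<k. norm (p j (\<gamma> j)) * d ^ deg (\<gamma> j)) has_sum (\<Prod>j<k. snorm d (p j))) UNIV"
    unfolding snorm_def by (rule has_sum_cauchy_product) (use s d in \<open>auto simp: sinA_def\<close>)
  have eq: "(\<Sum>\<gamma>\<in>splits k \<beta>. \<Prod>j<k. norm (p j (\<gamma> j)) * d ^ deg (\<gamma> j))
      = (\<Sum>\<gamma>\<in>splits k \<beta>. \<Prod>j<k. norm (p j (\<gamma> j))) * d ^ deg \<beta>" for \<beta>
    unfolding sum_distrib_right
    by (rule sum.cong) (auto simp: splits_def prod.distrib deg_sum power_sum)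
  have le: "norm (conv k p \<beta>) * d ^ deg \<beta> \<le> (\<Sum>\<gamma>\<in>splits k \<beta>. \<Prod>j<k. norm (p j (\<gamma> j)) * d ^ deg (\<gamma> j))" for \<beta>
    unfolding eq conv_def
    by (rule mult_right_mono) (auto simp: d prod_norm intro: order_trans[OF norm_sum])
  show c: "sinA d (conv k p)" unfolding sinA_def
    by (rule summable_on_comparison_test[OF has_sum_imp_summable[OF hs] le]) (simp add: d)
  show "snorm d (conv k p) \<le> (\<Prod>j<k. snorm d (p j))"
    unfolding snorm_def[of d "conv k p"] by (rule has_sum_mono[OF has_sum_infsum[OF c[unfolded sinA_def]] hs le])
qed

lemma has_sum_vec:
  fixes f :: "'a \<Rightarrow> 'b::real_normed_vector^'n::finite"
  shows "(f has_sum S) A \<longleftrightarrow> (\<forall>i. ((\<lambda>x. f x $ i) has_sum S $ i) A)"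
proof
  assume "(f has_sum S) A"
  then show "\<forall>i. ((\<lambda>x. f x $ i) has_sum S $ i) A"
    using has_sum_bounded_linear[OF bounded_linear_vec_nth] by blast
next
  assume a: "\<forall>i. ((\<lambda>x. f x $ i) has_sum S $ i) A"
  show "(f has_sum S) A" unfolding has_sum_def
    by (rule vec_tendstoI) (use a in \<open>simp add: has_sum_def sum_component\<close>)
qed

lemma has_sum_finite_sum:
  fixes f :: "'i \<Rightarrow> 'a \<Rightarrow> 'b::topological_comm_monoid_add"
  assumes "finite I" "\<And>i. i \<in> I \<Longrightarrow> (f i has_sum s i) A"
  shows "((\<lambda>x. \<Sum>i\<in>I. f i x) has_sum (\<Sum>i\<in>I. s i)) A"
  using assms by (induction I rule: finite_induct) (auto intro: has_sum_add)

definition coord :: "(('m::finite \<Rightarrow> nat) \<Rightarrow> complex^'l::finite) \<Rightarrow> 'l \<Rightarrow> ('m \<Rightarrow> nat) \<Rightarrow> complex" where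
  "coord g i = (\<lambda>\<beta>. g \<beta> $ i)"

lemma coord_bound:
  assumes "inA d g" "0 \<le> d" shows "sinA d (coord g i)" "snorm d (coord g i) \<le> Anorm d g"
proof -
  have le: "norm (coord g i \<beta>) * d ^ deg \<beta> \<le> supn (g \<beta>) * d ^ deg \<beta>" for \<beta>
    using assms(2) by (auto simp: coord_def intro: mult_right_mono supn_ge)
  show c: "sinA d (coord g i)" unfolding sinA_def
    by (rule summable_on_comparison_test[OF assms(1)[unfolded inA_def] le]) (simp add: assms)
  show "snorm d (coord g i) \<le> Anorm d g"
    unfolding snorm_def Anorm_def
    by (rule infsum_mono[OF c[unfolded sinA_def] assms(1)[unfolded inA_def] le])
qed

lemma has_sum_evalA:
  fixes c :: "('m::finite \<Rightarrow> nat) \<Rightarrow> complex^'s::finite"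
  assumes c: "inA d c" and z: "supn z \<le> d"
  shows "((\<lambda>\<alpha>. zpow z \<alpha> *s c \<alpha>) has_sum evalA c z) UNIV"
proof -
  have d: "0 \<le> d" using supn_nonneg z order_trans by blast
  have le: "norm (zpow z \<alpha> *s c \<alpha>) \<le> of_nat CARD('s) * (supn (c \<alpha>) * d ^ deg \<alpha>)" for \<alpha>
  proof -
    have "norm (zpow z \<alpha> *s c \<alpha>) \<le> of_nat CARD('s) * supn (zpow z \<alpha> *s c \<alpha>)" by (rule norm_le_supn)
    also have "\<dots> = of_nat CARD('s) * (norm (zpow z \<alpha>) * supn (c \<alpha>))" by (simp add: supn_smult)
    also have "\<dots> \<le> of_nat CARD('s) * (supn (c \<alpha>) * d ^ deg \<alpha>)"
      using norm_zpow[OF z, of \<alpha>] supn_nonneg[of "c \<alpha>"]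
      by (intro mult_left_mono) (auto simp: mult.commute intro: mult_left_mono)
    finally show ?thesis .
  qed
  have "(\<lambda>\<alpha>. of_nat CARD('s) * (supn (c \<alpha>) * d ^ deg \<alpha>)) summable_on UNIV"
    using c unfolding inA_def by (rule summable_on_cmult_right)
  then have "(\<lambda>\<alpha>. norm (zpow z \<alpha> *s c \<alpha>)) summable_on UNIV"
    by (rule summable_on_comparison_test) (use le in auto)
  then have "(\<lambda>\<alpha>. zpow z \<alpha> *s c \<alpha>) summable_on UNIV" by (rule abs_summable_summable)
  then show ?thesis unfolding evalA_def by (rule has_sum_infsum)
qed

lemma has_sum_evalA_coord:
  assumes "inA d c" and "supn z \<le> d"
  shows "((\<lambda>\<alpha>. zpow z \<alpha> * coord c i \<alpha>) has_sum evalA c z $ i) UNIV"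
  using has_sum_evalA[OF assms] unfolding has_sum_vec by (simp add: coord_def)

text \<open>The value on the polydisc is bounded by the norm; this makes \<open>g(z)\<close> land in the
  polydisc of radius \<open>\<rho>\<close> whenever \<open>\<parallel>g\<parallel>\<^sub>\<delta> \<le> \<rho>\<close>.\<close>
lemma supn_evalA_le:
  assumes c: "inA d c" and z: "supn z \<le> d"
  shows "supn (evalA c z) \<le> Anorm d c"
proof (rule supn_le)
  fix i
  show "norm (evalA c z $ i) \<le> Anorm d c"
  proof (rule norm_infsum_le[OF has_sum_evalA_coord[OF c z] has_sum_Anorm[OF c]])
    fix \<alpha>
    have "norm (zpow z \<alpha> * coord c i \<alpha>) = norm (zpow z \<alpha>) * norm (c \<alpha> $ i)" by (simp add: coord_def norm_mult)
    also have "\<dots> \<le> d ^ deg \<alpha> * supn (c \<alpha>)"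
      using supn_nonneg[of z] z by (intro mult_mono) (auto simp: norm_zpow[OF z] supn_ge)
    finally show "norm (zpow z \<alpha> * coord c i \<alpha>) \<le> supn (c \<alpha>) * d ^ deg \<alpha>" by (simp add: mult.commute)
  qed
qed

lemma summable_on_norm_eval:
  assumes p: "sinA d p" and z: "supn z \<le> d"
  shows "(\<lambda>\<gamma>. norm (zpow z \<gamma> * p \<gamma>)) summable_on UNIV"
proof (rule summable_on_comparison_test[OF p[unfolded sinA_def]])
  fix \<gamma>
  show "norm (zpow z \<gamma> * p \<gamma>) \<le> norm (p \<gamma>) * d ^ deg \<gamma>"
    by (simp add: norm_mult mult.commute mult_left_mono norm_zpow[OF z])
qed simp

section \<open>Words and multi-indices\<close>

definition words :: "nat \<Rightarrow> (nat \<Rightarrow> 'l::finite) set" where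
  "words k = PiE {..<k} (\<lambda>_. UNIV)"

definition letters :: "nat \<Rightarrow> (nat \<Rightarrow> 'l::finite) \<Rightarrow> 'l \<Rightarrow> nat" where
  "letters k t = (\<lambda>i. card {j\<in>{..<k}. t j = i})"

definition fibre :: "nat \<Rightarrow> ('l::finite \<Rightarrow> nat) \<Rightarrow> (nat \<Rightarrow> 'l) set" where
  "fibre k \<alpha> = {t\<in>words k. letters k t = \<alpha>}"

definition of_deg :: "nat \<Rightarrow> ('l::finite \<Rightarrow> nat) set" where
  "of_deg k = {\<alpha>. deg \<alpha> = k}"

lemma finite_words: "finite (words k)"
  unfolding words_def by (intro finite_PiE) auto

lemma finite_fibre: "finite (fibre k \<alpha>)"
  unfolding fibre_def by (rule finite_subset[OF _ finite_words]) auto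

lemma finite_of_deg: "finite (of_deg k :: ('l::finite \<Rightarrow> nat) set)"
proof -
  have "of_deg k \<subseteq> PiE (UNIV::'l set) (\<lambda>_. {..k})"
  proof
    fix \<alpha> :: "'l \<Rightarrow> nat" assume "\<alpha> \<in> of_deg k"
    then have "\<alpha> i \<le> k" for i unfolding of_deg_def deg_def
      using member_le_sum[of i UNIV \<alpha>] by auto
    then show "\<alpha> \<in> PiE UNIV (\<lambda>_. {..k})" by auto
  qed
  moreover have "finite (PiE (UNIV::'l set) (\<lambda>_. {..k}))" by (intro finite_PiE) auto
  ultimately show ?thesis by (rule finite_subset)
qed

lemma deg_letters: "deg (letters k t) = k"
proof -
  have "deg (letters k t) = (\<Sum>i\<in>UNIV. card {j. j \<in> {..<k} \<and> t j = i})"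
    unfolding deg_def letters_def by simp
  also have "\<dots> = (\<Sum>i\<in>UNIV. \<Sum>j\<in>{j. j \<in> {..<k} \<and> t j = i}. 1)" by simp
  also have "\<dots> = (\<Sum>j\<in>{..<k}. (1::nat))"
    by (rule sum.group) auto
  finally show ?thesis by simp
qed

lemma letters_image: "letters k ` words k = (of_deg k :: ('l::finite \<Rightarrow> nat) set)"
proof
  show "letters k ` words k \<subseteq> of_deg k" by (auto simp: of_deg_def deg_letters)
  show "of_deg k \<subseteq> letters k ` (words k :: (nat \<Rightarrow> 'l) set)"
  proof
    fix \<alpha> :: "'l \<Rightarrow> nat" assume a: "\<alpha> \<in> of_deg k"
    obtain xs where xs: "mset xs = (\<Sum>i\<in>UNIV. replicate_mset (\<alpha> i) i)" using ex_mset by blast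
    have count: "count_list xs i = \<alpha> i" for i
      using xs by (simp add: count_mset[symmetric] count_sum)
    have len: "length xs = k"
    proof -
      have "length xs = (\<Sum>i\<in>UNIV. count_list xs i)" by (rule sum_count_set[symmetric]) auto
      also have "\<dots> = k" using a by (simp add: count of_deg_def deg_def)
      finally show ?thesis .
    qed
    define t where "t = restrict (\<lambda>j. xs ! j) {..<k}"
    have "t \<in> words k" by (simp add: t_def words_def)
    moreover have "letters k t = \<alpha>"
    proof (rule ext)
      fix i
      have "{j\<in>{..<k}. t j = i} = {j. j < length xs \<and> i = xs ! j}" using len by (auto simp: t_def)
      then show "letters k t i = \<alpha> i"
        by (simp add: letters_def count[symmetric] count_list_eq_length_filter length_filter_conv_card)
    qed
    ultimately show "\<alpha> \<in> letters k ` words k" by (metis image_eqI)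
  qed
qed

lemma card_fibre_pos:
  assumes "\<alpha> \<in> of_deg k" shows "card (fibre k \<alpha>) > 0"
proof -
  from assms obtain t where t: "t \<in> words k" "letters k t = \<alpha>" unfolding letters_image[symmetric] by auto
  then have "t \<in> fibre k \<alpha>" by (simp add: fibre_def)
  then show ?thesis using finite_fibre[of k \<alpha>] card_gt_0_iff by blast
qed

lemma sum_over_fibres:
  fixes H :: "('l::finite \<Rightarrow> nat) \<Rightarrow> 'v::real_vector"
  shows "(\<Sum>t\<in>words k. (1 / real (card (fibre k (letters k t)))) *\<^sub>R H (letters k t)) = (\<Sum>\<alpha>\<in>of_deg k. H \<alpha>)"
proof -
  have "(\<Sum>t\<in>words k. (1 / real (card (fibre k (letters k t)))) *\<^sub>R H (letters k t))
      = (\<Sum>\<alpha>\<in>of_deg k. \<Sum>t\<in>{t. t \<in> words k \<and> letters k t = \<alpha>}. (1 / real (card (fibre k (letters k t)))) *\<^sub>R H (letters k t))"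
    by (rule sum.group[symmetric]) (auto simp: finite_words finite_of_deg letters_image)
  also have "\<dots> = (\<Sum>\<alpha>\<in>of_deg k. \<Sum>t\<in>fibre k \<alpha>. (1 / real (card (fibre k \<alpha>))) *\<^sub>R H \<alpha>)"
    by (rule sum.cong) (auto simp: fibre_def)
  also have "\<dots> = (\<Sum>\<alpha>\<in>of_deg k. H \<alpha>)"
  proof (rule sum.cong)
    fix \<alpha> :: "'l \<Rightarrow> nat" assume "\<alpha> \<in> of_deg k"
    then have "card (fibre k \<alpha>) > 0" by (rule card_fibre_pos)
    then show "(\<Sum>t\<in>fibre k \<alpha>. (1 / real (card (fibre k \<alpha>))) *\<^sub>R H \<alpha>) = H \<alpha>"
      by (simp add: sum_constant_scaleR)
  qed simp
  finally show ?thesis .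
qed

lemma prod_letters: "t \<in> words k \<Longrightarrow> (\<Prod>j<k. w $ t j) = zpow w (letters k t)"
proof -
  have "(\<Prod>j<k. w $ t j) = (\<Prod>i\<in>UNIV. \<Prod>j\<in>{j. j \<in> {..<k} \<and> t j = i}. w $ t j)"
    by (rule prod.group[symmetric]) auto
  also have "\<dots> = (\<Prod>i\<in>UNIV. w $ i ^ letters k t i)"
    by (rule prod.cong) (auto simp: letters_def)
  finally show ?thesis by (simp add: zpow_def)
qed

lemma has_sum_by_degree:
  fixes F :: "('l::finite \<Rightarrow> nat) \<Rightarrow> 'c::{comm_monoid_add, uniform_topological_group_add}"
  assumes "(F has_sum S) UNIV"
  shows "((\<lambda>k. \<Sum>\<alpha>\<in>of_deg k. F \<alpha>) has_sum S) UNIV"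
proof -
  have bij: "bij_betw (\<lambda>\<alpha>. (deg \<alpha>, \<alpha>)) UNIV (Sigma UNIV of_deg)"
    by (rule bij_betwI[where g = snd]) (auto simp: of_deg_def)
  have "((\<lambda>(k,\<alpha>). F \<alpha>) has_sum S) (Sigma UNIV of_deg)"
    using has_sum_reindex_bij_betw[OF bij, of "\<lambda>(k,\<alpha>). F \<alpha>"] assms by simp
  then show ?thesis
  proof (rule has_sum_Sigma')
    fix k :: nat
    show "((\<lambda>y. (\<lambda>(k,\<alpha>). F \<alpha>) (k, y)) has_sum (\<Sum>\<alpha>\<in>of_deg k. F \<alpha>)) (of_deg k)"
      using has_sum_finite[OF finite_of_deg, of F k] by simp
  qed
qed

definition deg_norm :: "(('l::finite \<Rightarrow> nat) \<Rightarrow> complex^'d::finite) \<Rightarrow> nat \<Rightarrow> real" where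
  "deg_norm f k = (\<Sum>\<alpha>\<in>of_deg k. supn (f \<alpha>))"

lemma deg_norm_nonneg: "0 \<le> deg_norm f k"
  unfolding deg_norm_def by (rule sum_nonneg) (simp add: supn_nonneg)

lemma has_sum_deg_norm:
  fixes f :: "('l::finite \<Rightarrow> nat) \<Rightarrow> complex^'d::finite"
  assumes "inA r f"
  shows "((\<lambda>k. deg_norm f k * r ^ k) has_sum Anorm r f) UNIV"
proof -
  have "((\<lambda>k. \<Sum>\<alpha>\<in>of_deg k. supn (f \<alpha>) * r ^ deg \<alpha>) has_sum Anorm r f) UNIV"
    by (rule has_sum_by_degree[OF has_sum_Anorm[OF assms]])
  moreover have "(\<Sum>\<alpha>\<in>of_deg k. supn (f \<alpha>) * r ^ deg \<alpha>) = deg_norm f k * r ^ k" for k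
    by (simp add: deg_norm_def sum_distrib_right of_deg_def)
  ultimately show ?thesis by simp
qed

section \<open>The symmetric multilinear operators\<close>

text \<open>The coefficient attached to a word: \<open>f\<close> at its letter count, shared equally by the fibre.\<close>
definition sym_coeff :: "(('l::finite \<Rightarrow> nat) \<Rightarrow> complex^'d::finite) \<Rightarrow> nat \<Rightarrow> (nat \<Rightarrow> 'l) \<Rightarrow> complex^'d" where
  "sym_coeff f k t = (1 / real (card (fibre k (letters k t)))) *\<^sub>R f (letters k t)"

text \<open>The \<open>k\<close>-linear operator: the polarisation of the degree-\<open>k\<close> part of \<open>f\<close>, acting on
  \<open>k\<close> coefficient families through Cauchy products of their coordinates.\<close>
definition comp_op :: "(('l::finite \<Rightarrow> nat) \<Rightarrow> complex^'d::finite) \<Rightarrow> nat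
    \<Rightarrow> (('m::finite \<Rightarrow> nat) \<Rightarrow> complex^'l) list \<Rightarrow> ('m \<Rightarrow> nat) \<Rightarrow> complex^'d" where
  "comp_op f k gs = (\<lambda>\<beta>. \<Sum>t\<in>words k. conv k (\<lambda>j. coord (gs ! j) (t j)) \<beta> *s sym_coeff f k t)"

lemma sum_supn_sym_coeff: "(\<Sum>t\<in>words k. supn (sym_coeff f k t)) = deg_norm f k"
proof -
  have "(\<Sum>t\<in>words k. supn (sym_coeff f k t))
      = (\<Sum>t\<in>words k. (1 / real (card (fibre k (letters k t)))) *\<^sub>R supn (f (letters k t)))"
    by (simp add: sym_coeff_def supn_scaleR)
  also have "\<dots> = deg_norm f k" unfolding deg_norm_def by (rule sum_over_fibres)
  finally show ?thesis .
qed

lemma comp_op_bound: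
  assumes d: "0 \<le> d" and gs: "\<And>g. g \<in> set gs \<Longrightarrow> inA d g" and len: "length gs = k"
  shows "inA d (comp_op f k gs)"
    "Anorm d (comp_op f k gs) \<le> deg_norm f k * (\<Prod>j<k. Anorm d (gs ! j))"
proof -
  define q where "q t = conv k (\<lambda>j. coord (gs ! j) (t j))" for t
  have gj: "inA d (gs ! j)" if "j < k" for j using gs len that by auto
  have qc: "sinA d (q t)" and qn: "snorm d (q t) \<le> (\<Prod>j<k. Anorm d (gs ! j))" for t
  proof -
    show "sinA d (q t)" unfolding q_def by (rule conv_bound(1)) (use d gj coord_bound in auto)
    have "snorm d (q t) \<le> (\<Prod>j<k. snorm d (coord (gs ! j) (t j)))"
      unfolding q_def by (rule conv_bound(2)) (use d gj coord_bound in auto)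
    also have "\<dots> \<le> (\<Prod>j<k. Anorm d (gs ! j))"
      by (rule prod_mono) (use coord_bound(2)[OF gj d] snorm_nonneg[OF d] in auto)
    finally show "snorm d (q t) \<le> (\<Prod>j<k. Anorm d (gs ! j))" .
  qed
  have le: "supn (comp_op f k gs \<beta>) * d ^ deg \<beta> \<le> (\<Sum>t\<in>words k. supn (sym_coeff f k t) * (norm (q t \<beta>) * d ^ deg \<beta>))" for \<beta>
  proof -
    have "supn (comp_op f k gs \<beta>) \<le> (\<Sum>t\<in>words k. supn (q t \<beta> *s sym_coeff f k t))"
      unfolding comp_op_def q_def by (rule supn_sum)
    then have "supn (comp_op f k gs \<beta>) * d ^ deg \<beta> \<le> (\<Sum>t\<in>words k. supn (q t \<beta> *s sym_coeff f k t)) * d ^ deg \<beta>"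
      by (rule mult_right_mono) (simp add: d)
    then show ?thesis by (simp add: supn_smult sum_distrib_right sum_distrib_left mult_ac)
  qed
  have hs: "((\<lambda>\<beta>. \<Sum>t\<in>words k. supn (sym_coeff f k t) * (norm (q t \<beta>) * d ^ deg \<beta>))
      has_sum (\<Sum>t\<in>words k. supn (sym_coeff f k t) * snorm d (q t))) UNIV"
    by (rule has_sum_finite_sum) (use qc in \<open>auto simp: finite_words sinA_def snorm_def intro!: has_sum_cmult_right\<close>)
  show c: "inA d (comp_op f k gs)" unfolding inA_def
    by (rule summable_on_comparison_test[OF has_sum_imp_summable[OF hs] le]) (simp add: d supn_nonneg)
  have "Anorm d (comp_op f k gs) \<le> (\<Sum>t\<in>words k. supn (sym_coeff f k t) * snorm d (q t))"
    unfolding Anorm_def by (rule has_sum_mono[OF has_sum_infsum[OF c[unfolded inA_def]] hs le])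
  also have "\<dots> \<le> (\<Sum>t\<in>words k. supn (sym_coeff f k t) * (\<Prod>j<k. Anorm d (gs ! j)))"
    by (rule sum_mono) (rule mult_left_mono[OF qn supn_nonneg])
  also have "\<dots> = deg_norm f k * (\<Prod>j<k. Anorm d (gs ! j))"
    by (simp add: sum_distrib_right[symmetric] sum_supn_sym_coeff)
  finally show "Anorm d (comp_op f k gs) \<le> deg_norm f k * (\<Prod>j<k. Anorm d (gs ! j))" .
qed

lemma has_sum_eval_comp_op:
  assumes z: "supn z \<le> d" and gs: "\<And>g. g \<in> set gs \<Longrightarrow> inA d g" and len: "length gs = k"
  shows "((\<lambda>\<beta>. zpow z \<beta> *s comp_op f k gs \<beta>) has_sum
           (\<Sum>t\<in>words k. (\<Prod>j<k. evalA (gs ! j) z $ t j) *s sym_coeff f k t)) UNIV"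
proof -
  have d: "0 \<le> d" using supn_nonneg[of z] z by linarith
  have gj: "inA d (gs ! j)" if "j < k" for j using gs len that by auto
  have ev: "((\<lambda>\<beta>. zpow z \<beta> * conv k (\<lambda>j. coord (gs ! j) (t j)) \<beta>) has_sum (\<Prod>j<k. evalA (gs ! j) z $ t j)) UNIV" for t
  proof -
    have "((\<lambda>\<beta>. zpow z \<beta> * conv k (\<lambda>j. coord (gs ! j) (t j)) \<beta>) has_sum
        (\<Prod>j<k. \<Sum>\<^sub>\<infinity>\<gamma>. zpow z \<gamma> * coord (gs ! j) (t j) \<gamma>)) UNIV"
      by (rule has_sum_eval_conv) (use gj coord_bound d summable_on_norm_eval z in blast)
    moreover have "(\<Sum>\<^sub>\<infinity>\<gamma>. zpow z \<gamma> * coord (gs ! j) (t j) \<gamma>) = evalA (gs ! j) z $ t j" if "j < k" for j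
      by (rule infsumI[OF has_sum_evalA_coord[OF gj[OF that] z]])
    ultimately show ?thesis by simp
  qed
  show ?thesis unfolding has_sum_vec
  proof
    fix i
    have "((\<lambda>\<beta>. \<Sum>t\<in>words k. (zpow z \<beta> * conv k (\<lambda>j. coord (gs ! j) (t j)) \<beta>) * sym_coeff f k t $ i) has_sum
        (\<Sum>t\<in>words k. (\<Prod>j<k. evalA (gs ! j) z $ t j) * sym_coeff f k t $ i)) UNIV"
      by (rule has_sum_finite_sum) (auto simp: finite_words intro!: has_sum_cmult_left ev)
    then show "((\<lambda>\<beta>. (zpow z \<beta> *s comp_op f k gs \<beta>) $ i) has_sum
        (\<Sum>t\<in>words k. (\<Prod>j<k. evalA (gs ! j) z $ t j) *s sym_coeff f k t) $ i) UNIV"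
      by (simp add: comp_op_def sum_distrib_left mult_ac)
  qed
qed

lemma evalA_comp_op_diagonal:
  fixes f :: "('l::finite \<Rightarrow> nat) \<Rightarrow> complex^'d::finite" and g :: "('m::finite \<Rightarrow> nat) \<Rightarrow> complex^'l"
  assumes z: "supn z \<le> d" and g: "inA d g"
  shows "evalA (comp_op f k (replicate k g)) z = (\<Sum>\<alpha>\<in>of_deg k. zpow (evalA g z) \<alpha> *s f \<alpha>)"
proof -
  have d: "0 \<le> d" using supn_nonneg[of z] z by linarith
  have "(\<Sum>t\<in>words k. (\<Prod>j<k. evalA (replicate k g ! j) z $ t j) *s sym_coeff f k t)
     = (\<Sum>t\<in>words k. (1 / real (card (fibre k (letters k t)))) *\<^sub>R (zpow (evalA g z) (letters k t) *s f (letters k t)))"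
    by (rule sum.cong) (simp_all add: prod_letters sym_coeff_def vec_eq_iff scaleR_conv_of_real)
  also have "\<dots> = (\<Sum>\<alpha>\<in>of_deg k. zpow (evalA g z) \<alpha> *s f \<alpha>)" by (rule sum_over_fibres)
  finally have word_sum: "(\<Sum>t\<in>words k. (\<Prod>j<k. evalA (replicate k g ! j) z $ t j) *s sym_coeff f k t)
     = (\<Sum>\<alpha>\<in>of_deg k. zpow (evalA g z) \<alpha> *s f \<alpha>)" .
  have "((\<lambda>\<beta>. zpow z \<beta> *s comp_op f k (replicate k g) \<beta>) has_sum evalA (comp_op f k (replicate k g)) z) UNIV"
    by (rule has_sum_evalA[OF comp_op_bound(1)[OF d] z]) (use g in auto)
  moreover have "((\<lambda>\<beta>. zpow z \<beta> *s comp_op f k (replicate k g) \<beta>) has_sum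
           (\<Sum>t\<in>words k. (\<Prod>j<k. evalA (replicate k g ! j) z $ t j) *s sym_coeff f k t)) UNIV"
    by (rule has_sum_eval_comp_op[OF z]) (use g in auto)
  ultimately show ?thesis unfolding word_sum by (rule has_sum_unique)
qed

lemma permute_restrict_inverse:
  assumes p: "p permutes {..<k}" and x: "x \<in> PiE {..<k} (\<lambda>_. UNIV)"
  shows "restrict (restrict (x \<circ> p) {..<k} \<circ> inv p) {..<k} = x"
    and "restrict (restrict (x \<circ> inv p) {..<k} \<circ> p) {..<k} = x"
proof -
  have pi: "p j < k \<longleftrightarrow> j < k" "inv p j < k \<longleftrightarrow> j < k" for j
    using permutes_in_image[OF p] permutes_in_image[OF permutes_inv[OF p]] by auto
  show "restrict (restrict (x \<circ> p) {..<k} \<circ> inv p) {..<k} = x"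
    using x pi by (auto simp: fun_eq_iff permutes_inverses[OF p] PiE_def extensional_def)
  show "restrict (restrict (x \<circ> inv p) {..<k} \<circ> p) {..<k} = x"
    using x pi by (auto simp: fun_eq_iff permutes_inverses[OF p] PiE_def extensional_def)
qed

lemma bij_betw_permute_words:
  assumes p: "p permutes {..<k}"
  shows "bij_betw (\<lambda>t. restrict (t \<circ> p) {..<k}) (words k) (words k)"
proof (rule bij_betwI[where g = "\<lambda>t. restrict (t \<circ> inv p) {..<k}"])
  show "(\<lambda>t. restrict (t \<circ> p) {..<k}) \<in> words k \<rightarrow> words k"
    and "(\<lambda>t. restrict (t \<circ> inv p) {..<k}) \<in> words k \<rightarrow> words k"
    by (auto simp: words_def)
  show "restrict (restrict (t \<circ> p) {..<k} \<circ> inv p) {..<k} = t"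
    and "restrict (restrict (t \<circ> inv p) {..<k} \<circ> p) {..<k} = t" if "t \<in> words k" for t
    using permute_restrict_inverse[OF p, of t] that by (simp_all add: words_def)
qed

lemma letters_permute:
  assumes p: "p permutes {..<k}"
  shows "letters k (restrict (t \<circ> p) {..<k}) = letters k t"
proof (rule ext)
  fix i
  have img: "p ` {j\<in>{..<k}. t (p j) = i} = {j\<in>{..<k}. t j = i}"
  proof
    show "p ` {j\<in>{..<k}. t (p j) = i} \<subseteq> {j\<in>{..<k}. t j = i}"
      using permutes_in_image[OF p] by auto
    show "{j\<in>{..<k}. t j = i} \<subseteq> p ` {j\<in>{..<k}. t (p j) = i}"
    proof
      fix j assume j: "j \<in> {j\<in>{..<k}. t j = i}"
      then have "inv p j \<in> {j\<in>{..<k}. t (p j) = i}"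
        using permutes_in_image[OF permutes_inv[OF p]] permutes_inverses[OF p] by auto
      then show "j \<in> p ` {j\<in>{..<k}. t (p j) = i}"
        using permutes_inverses[OF p] by (metis image_eqI)
    qed
  qed
  have inj: "inj_on p {j\<in>{..<k}. t (p j) = i}"
    using permutes_inj[OF p] by (auto intro: inj_on_subset)
  have "{j\<in>{..<k}. restrict (t \<circ> p) {..<k} j = i} = {j\<in>{..<k}. t (p j) = i}" by auto
  then show "letters k (restrict (t \<circ> p) {..<k}) i = letters k t i"
    unfolding letters_def using card_image[OF inj] img by simp
qed

lemma conv_cong: "(\<And>j. j < k \<Longrightarrow> p j = q j) \<Longrightarrow> conv k p = conv k q"
  unfolding conv_def by (intro ext sum.cong prod.cong) auto

lemma conv_permute:
  assumes p: "p permutes {..<k}"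
  shows "conv k q = conv k (\<lambda>j. q (p j))"
proof (rule ext)
  fix \<beta>
  have pi: "p j < k \<longleftrightarrow> j < k" for j
    using permutes_in_image[OF p] by auto
  have sum_perm: "(\<Sum>j<k. \<gamma> (p' j)) = (\<Sum>j<k. \<gamma> j)" if "p' permutes {..<k}" for \<gamma> :: "nat \<Rightarrow> 'a \<Rightarrow> nat" and p'
    using sum.reindex_bij_betw[OF permutes_imp_bij[OF that], of \<gamma>] .
  show "conv k q \<beta> = conv k (\<lambda>j. q (p j)) \<beta>"
    unfolding conv_def
  proof (rule sum.reindex_bij_witness[where j = "\<lambda>\<gamma>. restrict (\<gamma> \<circ> p) {..<k}"
        and i = "\<lambda>\<gamma>. restrict (\<gamma> \<circ> inv p) {..<k}"])
    fix \<gamma> assume g: "\<gamma> \<in> splits k \<beta>"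
    then have gP: "\<gamma> \<in> PiE {..<k} (\<lambda>_. UNIV)" by (simp add: splits_def)
    show "restrict (restrict (\<gamma> \<circ> p) {..<k} \<circ> inv p) {..<k} = \<gamma>"
      by (rule permute_restrict_inverse(1)[OF p gP])
    show "restrict (restrict (\<gamma> \<circ> inv p) {..<k} \<circ> p) {..<k} = \<gamma>"
      by (rule permute_restrict_inverse(2)[OF p gP])
    show "restrict (\<gamma> \<circ> p) {..<k} \<in> splits k \<beta>"
      using g sum_perm[OF p, of \<gamma>] pi by (simp add: splits_def)
    have "(\<Sum>j<k. restrict (\<gamma> \<circ> inv p) {..<k} j) = (\<Sum>j<k. \<gamma> (inv p j))" by simp
    also have "\<dots> = (\<Sum>j<k. \<gamma> j)" by (rule sum_perm[OF permutes_inv[OF p]])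
    finally show "restrict (\<gamma> \<circ> inv p) {..<k} \<in> splits k \<beta>"
      using g by (simp add: splits_def)
    show "(\<Prod>j<k. q (p j) (restrict (\<gamma> \<circ> p) {..<k} j)) = (\<Prod>j<k. q j (\<gamma> j))"
      using prod.reindex_bij_betw[OF permutes_imp_bij[OF p], of "\<lambda>j. q j (\<gamma> j)"] by simp
  qed
qed

lemma comp_op_symmetric:
  fixes gs hs :: "(('m::finite \<Rightarrow> nat) \<Rightarrow> complex^'l::finite) list" and f :: "('l \<Rightarrow> nat) \<Rightarrow> complex^'d::finite"
  assumes len: "length gs = k" and m: "mset gs = mset hs"
  shows "comp_op f k gs = comp_op f k hs"
proof (rule ext)
  fix \<beta>
  obtain p where p0: "p permutes {..<length gs}" "permute_list p gs = hs"
    using mset_eq_permutation[OF m[symmetric]] by blast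
  have p: "p permutes {..<k}" using p0 len by simp
  have hs: "hs ! j = gs ! p j" if "j < k" for j
    using permute_list_nth[OF p0(1)] p0(2) len that by auto
  have factors_eq: "conv k (\<lambda>j. coord (hs ! j) (restrict (t \<circ> p) {..<k} j))
      = conv k (\<lambda>j. coord (gs ! p j) (t (p j)))" for t
    by (rule conv_cong) (simp add: hs)
  have reorder: "conv k (\<lambda>j. coord (gs ! p j) (t (p j))) = conv k (\<lambda>j. coord (gs ! j) (t j))" for t
    using conv_permute[OF p, of "\<lambda>j. coord (gs ! j) (t j)"] by simp
  have coeff_eq: "sym_coeff f k (restrict (t \<circ> p) {..<k}) = sym_coeff f k t" for t
    by (simp add: sym_coeff_def letters_permute[OF p])
  have "comp_op f k hs \<beta>
      = (\<Sum>t\<in>words k. conv k (\<lambda>j. coord (hs ! j) (restrict (t \<circ> p) {..<k} j)) \<beta> *s sym_coeff f k (restrict (t \<circ> p) {..<k}))"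
    unfolding comp_op_def by (rule sum.reindex_bij_betw[OF bij_betw_permute_words[OF p], symmetric])
  also have "\<dots> = (\<Sum>t\<in>words k. conv k (\<lambda>j. coord (gs ! p j) (t (p j))) \<beta> *s sym_coeff f k t)"
    by (simp only: factors_eq coeff_eq)
  also have "\<dots> = comp_op f k gs \<beta>"
    unfolding comp_op_def by (simp only: reorder)
  finally show "comp_op f k gs \<beta> = comp_op f k hs \<beta>" by simp
qed

lemma nth_replace_mid:
  assumes "j \<noteq> length xs"
  shows "(xs @ w # ys) ! j = (xs @ u # ys) ! j"
  using assms by (auto simp: nth_append nth_Cons split: nat.split)

lemma prod_replace_mid:
  assumes q: "length xs < k"
  shows "(\<Prod>j<k. coord ((xs @ w # ys) ! j) (t j) (\<gamma> j))
       = coord w (t (length xs)) (\<gamma> (length xs)) * (\<Prod>j\<in>{..<k} - {length xs}. coord ((xs @ u # ys) ! j) (t j) (\<gamma> j))"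
proof -
  have "(\<Prod>j<k. coord ((xs @ w # ys) ! j) (t j) (\<gamma> j))
      = coord ((xs @ w # ys) ! length xs) (t (length xs)) (\<gamma> (length xs)) * (\<Prod>j\<in>{..<k} - {length xs}. coord ((xs @ w # ys) ! j) (t j) (\<gamma> j))"
    by (rule prod.remove) (use q in auto)
  also have "(\<Prod>j\<in>{..<k} - {length xs}. coord ((xs @ w # ys) ! j) (t j) (\<gamma> j))
      = (\<Prod>j\<in>{..<k} - {length xs}. coord ((xs @ u # ys) ! j) (t j) (\<gamma> j))"
    by (rule prod.cong) (auto simp: nth_replace_mid[of _ xs w ys u])
  finally show ?thesis by simp
qed

lemma comp_op_linear:
  assumes len: "length xs + length ys + 1 = k"
  shows "comp_op f k (xs @ (u + smultA a v) # ys) = comp_op f k (xs @ u # ys) + smultA a (comp_op f k (xs @ v # ys))"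
proof -
  have q: "length xs < k" using len by simp
  have prod_lin: "(\<Prod>j<k. coord ((xs @ (u + smultA a v) # ys) ! j) (t j) (\<gamma> j))
     = (\<Prod>j<k. coord ((xs @ u # ys) ! j) (t j) (\<gamma> j)) + a * (\<Prod>j<k. coord ((xs @ v # ys) ! j) (t j) (\<gamma> j))" for t \<gamma>
    unfolding prod_replace_mid[OF q, of _ ys t \<gamma> u]
    by (simp add: coord_def smultA_def algebra_simps)
  have conv_lin: "conv k (\<lambda>j. coord ((xs @ (u + smultA a v) # ys) ! j) (t j)) \<beta>
      = conv k (\<lambda>j. coord ((xs @ u # ys) ! j) (t j)) \<beta> + a * conv k (\<lambda>j. coord ((xs @ v # ys) ! j) (t j)) \<beta>" for t \<beta>
    unfolding conv_def prod_lin by (simp add: sum.distrib sum_distrib_left)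
  show ?thesis
    unfolding comp_op_def conv_lin
    by (rule ext) (simp add: vec_eq_iff smultA_def sum.distrib sum_distrib_left algebra_simps)
qed

lemma comp_op_unit_norm:
  assumes d: "0 \<le> d" and len: "length gs = k" and gs: "\<forall>g\<in>set gs. inA d g \<and> Anorm d g = 1"
  shows "Anorm d (comp_op f k gs) \<le> deg_norm f k"
proof -
  have "Anorm d (comp_op f k gs) \<le> deg_norm f k * (\<Prod>j<k. Anorm d (gs ! j))"
    by (rule comp_op_bound(2)) (use d gs len in auto)
  also have "(\<Prod>j<k. Anorm d (gs ! j)) = 1"
    by (rule prod.neutral) (use gs len in auto)
  finally show ?thesis by simp
qed

lemma comp_op_sym_mlin:
  fixes f :: "('l::finite \<Rightarrow> nat) \<Rightarrow> complex^'d::finite"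
  assumes d: "0 \<le> d"
  shows "sym_mlin d k (comp_op f k :: (('m::finite \<Rightarrow> nat) \<Rightarrow> complex^'l) list \<Rightarrow> _)"
  unfolding sym_mlin_def
proof (intro conjI allI impI)
  fix gs :: "(('m \<Rightarrow> nat) \<Rightarrow> complex^'l) list" assume "length gs = k \<and> (\<forall>g\<in>set gs. inA d g)"
  then show "inA d (comp_op f k gs)" using comp_op_bound(1)[OF d] by auto
next
  fix gs hs :: "(('m \<Rightarrow> nat) \<Rightarrow> complex^'l) list"
  assume "length gs = k \<and> (\<forall>g\<in>set gs. inA d g) \<and> mset gs = mset hs"
  then show "comp_op f k gs = comp_op f k hs" using comp_op_symmetric by blast
next
  fix xs ys :: "(('m \<Rightarrow> nat) \<Rightarrow> complex^'l) list" and u v :: "('m \<Rightarrow> nat) \<Rightarrow> complex^'l" and a :: complex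
  assume "length xs + length ys + 1 = k \<and> (\<forall>g\<in>set (xs @ ys). inA d g) \<and> inA d u \<and> inA d v"
  then show "comp_op f k (xs @ (u + smultA a v) # ys) = comp_op f k (xs @ u # ys) + smultA a (comp_op f k (xs @ v # ys))"
    using comp_op_linear by blast
next
  show "bdd_above (mlset d k (comp_op f k :: (('m \<Rightarrow> nat) \<Rightarrow> complex^'l) list \<Rightarrow> _))"
    by (rule bdd_aboveI[where M = "deg_norm f k"]) (auto simp: mlset_def intro: comp_op_unit_norm[OF d])
qed

text \<open>The constant family \<open>(1,\<dots>,1)\<close> has norm one, so the unit sphere of \<open>E\<close> is nonempty.\<close>
definition unitA :: "('m::finite \<Rightarrow> nat) \<Rightarrow> complex^'l::finite" where
  "unitA = (\<lambda>\<beta>. if \<beta> = 0 then (\<chi> i. 1) else 0)"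

lemma unitA: "inA d (unitA :: ('m::finite \<Rightarrow> nat) \<Rightarrow> complex^'l::finite)" "Anorm d (unitA :: ('m \<Rightarrow> nat) \<Rightarrow> complex^'l) = 1"
proof -
  have s1: "supn ((\<chi> i. 1) :: complex^'l) = 1"
    by (rule antisym) (auto intro: supn_le order_trans[OF _ supn_ge[of _ undefined]])
  have e: "supn (unitA \<beta> :: complex^'l) * d ^ deg \<beta> = (if \<beta> = 0 then 1 else 0)" for \<beta> :: "'m \<Rightarrow> nat"
    by (simp add: unitA_def s1)
  have "((\<lambda>\<beta>. if \<beta> = (0::'m \<Rightarrow> nat) then (1::real) else 0) has_sum 1) UNIV"
    using has_sum_finite[of "{0::'m\<Rightarrow>nat}" "\<lambda>\<beta>. if \<beta> = (0::'m \<Rightarrow> nat) then (1::real) else 0"]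
    by (subst has_sum_cong_neutral[where T = "{0}"]) auto
  then have h: "((\<lambda>\<beta>. supn (unitA \<beta> :: complex^'l) * d ^ deg \<beta>) has_sum 1) (UNIV :: ('m \<Rightarrow> nat) set)"
    unfolding e by simp
  show "inA d (unitA :: ('m \<Rightarrow> nat) \<Rightarrow> complex^'l)" unfolding inA_def using h by (rule has_sum_imp_summable)
  show "Anorm d (unitA :: ('m \<Rightarrow> nat) \<Rightarrow> complex^'l) = 1" unfolding Anorm_def using h by (rule infsumI)
qed

lemma mlnorm_comp_op:
  assumes d: "0 \<le> d"
  shows "0 \<le> mlnorm d k (comp_op f k :: (('m::finite \<Rightarrow> nat) \<Rightarrow> complex^'l::finite) list \<Rightarrow> _)"
    "mlnorm d k (comp_op f k :: (('m::finite \<Rightarrow> nat) \<Rightarrow> complex^'l::finite) list \<Rightarrow> _) \<le> deg_norm f k"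
proof -
  let ?B = "comp_op f k :: (('m::finite \<Rightarrow> nat) \<Rightarrow> complex^'l::finite) list \<Rightarrow> _"
  have mem: "Anorm d (?B (replicate k unitA)) \<in> mlset d k ?B"
    unfolding mlset_def using unitA by fastforce
  have "sym_mlin d k ?B" by (rule comp_op_sym_mlin[OF d])
  then have bdd: "bdd_above (mlset d k ?B)" by (simp add: sym_mlin_def)
  have "0 \<le> Anorm d (?B (replicate k unitA))" by (rule Anorm_nonneg[OF d])
  also have "\<dots> \<le> mlnorm d k ?B" unfolding mlnorm_def by (rule cSup_upper[OF mem bdd])
  finally show "0 \<le> mlnorm d k ?B" .
  show "mlnorm d k ?B \<le> deg_norm f k" unfolding mlnorm_def
    by (rule cSup_least) (use mem in \<open>auto simp: mlset_def intro!: comp_op_unit_norm[OF d]\<close>)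
qed

section \<open>Absolutely convergent series in \<open>A_\<delta>\<close>\<close>

lemma lessThan_Un_atLeast_UNIV: "{..<n} \<union> {n..} = (UNIV :: 'a::linorder set)"
  by auto

lemma infsum_tail_tendsto_zero:
  fixes a :: "nat \<Rightarrow> 'a::banach"
  assumes "a summable_on UNIV"
  shows "(\<lambda>n. \<Sum>\<^sub>\<infinity>k\<in>{n..}. a k) \<longlonglongrightarrow> 0"
proof -
  have split: "(\<Sum>\<^sub>\<infinity>k\<in>{n..}. a k) = (\<Sum>\<^sub>\<infinity>k. a k) - (\<Sum>k<n. a k)" for n
  proof -
    have "(\<Sum>\<^sub>\<infinity>k. a k) = (\<Sum>\<^sub>\<infinity>k\<in>{..<n} \<union> {n..}. a k)"
      by (simp only: lessThan_Un_atLeast_UNIV)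
    also have "\<dots> = (\<Sum>\<^sub>\<infinity>k\<in>{..<n}. a k) + (\<Sum>\<^sub>\<infinity>k\<in>{n..}. a k)"
      by (rule infsum_Un_disjoint) (auto intro: summable_on_subset_banach[OF assms])
    finally show ?thesis by simp
  qed
  have "(\<lambda>n. \<Sum>k<n. a k) \<longlonglongrightarrow> (\<Sum>\<^sub>\<infinity>k. a k)"
    using has_sum_imp_sums[OF has_sum_infsum[OF assms]] by (simp add: sums_def)
  then have "(\<lambda>n. (\<Sum>\<^sub>\<infinity>k. a k) - (\<Sum>k<n. a k)) \<longlonglongrightarrow> (\<Sum>\<^sub>\<infinity>k. a k) - (\<Sum>\<^sub>\<infinity>k. a k)"
    by (intro tendsto_diff tendsto_const)
  then show ?thesis by (simp add: split)
qed

definition series_sum :: "(nat \<Rightarrow> ('m::finite \<Rightarrow> nat) \<Rightarrow> complex^'s::finite) \<Rightarrow> ('m \<Rightarrow> nat) \<Rightarrow> complex^'s" where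
  "series_sum b = (\<lambda>\<beta>. \<Sum>\<^sub>\<infinity>k. b k \<beta>)"

lemma coeff_series_double_summable:
  fixes b :: "nat \<Rightarrow> ('m::finite \<Rightarrow> nat) \<Rightarrow> complex^'s::finite"
  assumes d: "0 \<le> \<delta>" and bA: "\<And>k. inA \<delta> (b k)" and bs: "(\<lambda>k. Anorm \<delta> (b k)) summable_on UNIV"
  shows "(\<lambda>(\<beta>,k). supn (b k \<beta>) * \<delta> ^ deg \<beta>) summable_on UNIV \<times> UNIV"
proof -
  have "(\<lambda>(k,\<beta>). supn (b k \<beta>) * \<delta> ^ deg \<beta>) summable_on UNIV \<times> UNIV"
    by (rule summable_on_SigmaI[where g = "\<lambda>k. Anorm \<delta> (b k)"])
       (use has_sum_Anorm[OF bA] bs d in \<open>auto simp: supn_nonneg\<close>)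
  from summable_on_swap[THEN iffD1, OF this] show ?thesis
    by (simp add: case_prod_unfold)
qed

lemma coeff_series_summable:
  fixes b :: "nat \<Rightarrow> ('m::finite \<Rightarrow> nat) \<Rightarrow> complex^'s::finite"
  assumes d: "0 < \<delta>" and bA: "\<And>k. inA \<delta> (b k)" and bs: "(\<lambda>k. Anorm \<delta> (b k)) summable_on UNIV"
  shows "(\<lambda>k. supn (b k \<beta>)) summable_on A" "(\<lambda>k. b k \<beta>) summable_on A"
proof -
  have "(\<lambda>k. supn (b k \<beta>) * \<delta> ^ deg \<beta>) summable_on UNIV"
    using summable_on_SigmaD1[of "\<lambda>\<beta> k. supn (b k \<beta>) * \<delta> ^ deg \<beta>" UNIV "\<lambda>_. UNIV" \<beta>]
      coeff_series_double_summable[OF _ bA bs] d by simp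
  then have "(\<lambda>k. supn (b k \<beta>) * \<delta> ^ deg \<beta> * (1 / \<delta> ^ deg \<beta>)) summable_on UNIV"
    by (rule summable_on_cmult_left)
  then have sup: "(\<lambda>k. supn (b k \<beta>)) summable_on UNIV"
    using d by simp
  then show "(\<lambda>k. supn (b k \<beta>)) summable_on A"
    by (rule summable_on_subset_banach) simp
  have "(\<lambda>k. of_nat CARD('s) * supn (b k \<beta>)) summable_on UNIV"
    by (rule summable_on_cmult_right[OF sup])
  then have "(\<lambda>k. norm (b k \<beta>)) summable_on UNIV"
    by (rule summable_on_comparison_test) (auto simp: norm_le_supn)
  then show "(\<lambda>k. b k \<beta>) summable_on A"
    by (rule summable_on_subset_banach[OF abs_summable_summable]) simp
qed

lemma coeff_series_tail:
  fixes b :: "nat \<Rightarrow> ('m::finite \<Rightarrow> nat) \<Rightarrow> complex^'s::finite"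
  assumes d: "0 < \<delta>" and bA: "\<And>k. inA \<delta> (b k)" and bs: "(\<lambda>k. Anorm \<delta> (b k)) summable_on UNIV"
  shows "inA \<delta> (series_sum b - (\<Sum>k<n. b k))"
    "Anorm \<delta> (series_sum b - (\<Sum>k<n. b k)) \<le> (\<Sum>\<^sub>\<infinity>k\<in>{n..}. Anorm \<delta> (b k))"
proof -
  let ?T = "{n..} :: nat set" and ?r = "\<lambda>k \<beta>. supn (b k \<beta>) * \<delta> ^ deg \<beta>"
  have tail: "(series_sum b - (\<Sum>k<n. b k)) \<beta> = (\<Sum>\<^sub>\<infinity>k\<in>?T. b k \<beta>)" for \<beta>
  proof -
    have "series_sum b \<beta> = (\<Sum>\<^sub>\<infinity>k\<in>{..<n} \<union> ?T. b k \<beta>)"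
      by (simp only: series_sum_def lessThan_Un_atLeast_UNIV)
    also have "\<dots> = (\<Sum>\<^sub>\<infinity>k\<in>{..<n}. b k \<beta>) + (\<Sum>\<^sub>\<infinity>k\<in>?T. b k \<beta>)"
      by (rule infsum_Un_disjoint) (auto intro: coeff_series_summable(2)[OF d bA bs])
    finally show ?thesis by (simp add: sum_fun_apply)
  qed
  have rT: "(\<lambda>(\<beta>,k). ?r k \<beta>) summable_on UNIV \<times> ?T"
    by (rule summable_on_subset_banach[OF coeff_series_double_summable[OF _ bA bs]]) (use d in auto)
  define R where "R \<beta> = (\<Sum>\<^sub>\<infinity>k\<in>?T. ?r k \<beta>)" for \<beta>
  have R: "R summable_on UNIV"
    unfolding R_def using summable_on_Sigma_banach[of "\<lambda>\<beta> k. ?r k \<beta>" UNIV "\<lambda>_. ?T"] rT by simp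
  have le: "supn ((series_sum b - (\<Sum>k<n. b k)) \<beta>) * \<delta> ^ deg \<beta> \<le> R \<beta>" for \<beta>
  proof -
    have "supn ((series_sum b - (\<Sum>k<n. b k)) \<beta>) \<le> (\<Sum>\<^sub>\<infinity>k\<in>?T. supn (b k \<beta>))"
    proof (rule supn_le)
      fix i
      have "((\<lambda>k. b k \<beta> $ i) has_sum (\<Sum>\<^sub>\<infinity>k\<in>?T. b k \<beta>) $ i) ?T"
        using has_sum_infsum[OF coeff_series_summable(2)[OF d bA bs]] unfolding has_sum_vec by blast
      then show "norm ((series_sum b - (\<Sum>k<n. b k)) \<beta> $ i) \<le> (\<Sum>\<^sub>\<infinity>k\<in>?T. supn (b k \<beta>))"
        unfolding tail
        by (rule norm_infsum_le[OF _ has_sum_infsum[OF coeff_series_summable(1)[OF d bA bs]]]) (rule supn_ge)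
    qed
    then have "supn ((series_sum b - (\<Sum>k<n. b k)) \<beta>) * \<delta> ^ deg \<beta> \<le> (\<Sum>\<^sub>\<infinity>k\<in>?T. supn (b k \<beta>)) * \<delta> ^ deg \<beta>"
      by (rule mult_right_mono) (use d in simp)
    also have "\<dots> = R \<beta>" unfolding R_def by (rule infsum_cmult_left'[symmetric])
    finally show ?thesis .
  qed
  show inA: "inA \<delta> (series_sum b - (\<Sum>k<n. b k))" unfolding inA_def
    by (rule summable_on_comparison_test[OF R le]) (use d in \<open>simp add: supn_nonneg\<close>)
  have "Anorm \<delta> (series_sum b - (\<Sum>k<n. b k)) \<le> (\<Sum>\<^sub>\<infinity>\<beta>. R \<beta>)"
    unfolding Anorm_def by (rule infsum_mono[OF inA[unfolded inA_def] R le])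
  also have "\<dots> = (\<Sum>\<^sub>\<infinity>k\<in>?T. \<Sum>\<^sub>\<infinity>\<beta>. ?r k \<beta>)"
    unfolding R_def by (rule infsum_swap_banach[OF rT])
  also have "\<dots> = (\<Sum>\<^sub>\<infinity>k\<in>?T. Anorm \<delta> (b k))"
    by (rule infsum_cong) (rule infsumI[OF has_sum_Anorm[OF bA]])
  finally show "Anorm \<delta> (series_sum b - (\<Sum>k<n. b k)) \<le> (\<Sum>\<^sub>\<infinity>k\<in>?T. Anorm \<delta> (b k))" .
qed

lemma coeff_series_converges:
  fixes b :: "nat \<Rightarrow> ('m::finite \<Rightarrow> nat) \<Rightarrow> complex^'s::finite"
  assumes d: "0 < \<delta>" and bA: "\<And>k. inA \<delta> (b k)" and bs: "(\<lambda>k. Anorm \<delta> (b k)) summable_on UNIV"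
  shows "inA \<delta> (series_sum b)" "(\<lambda>n. Anorm \<delta> (series_sum b - (\<Sum>k<n. b k))) \<longlonglongrightarrow> 0"
proof -
  show "inA \<delta> (series_sum b)" using coeff_series_tail(1)[OF d bA bs, of 0] by simp
  show "(\<lambda>n. Anorm \<delta> (series_sum b - (\<Sum>k<n. b k))) \<longlonglongrightarrow> 0"
  proof (rule Lim_null_comparison[OF always_eventually infsum_tail_tendsto_zero[OF bs]])
    show "\<forall>n. norm (Anorm \<delta> (series_sum b - (\<Sum>k<n. b k))) \<le> (\<Sum>\<^sub>\<infinity>k\<in>{n..}. Anorm \<delta> (b k))"
    proof
      fix n
      have "0 \<le> Anorm \<delta> (series_sum b - (\<Sum>k<n. b k))" by (rule Anorm_nonneg) (use d in simp)
      then show "norm (Anorm \<delta> (series_sum b - (\<Sum>k<n. b k))) \<le> (\<Sum>\<^sub>\<infinity>k\<in>{n..}. Anorm \<delta> (b k))"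
        using coeff_series_tail(2)[OF d bA bs, of n] by simp
    qed
  qed
qed

lemma evalA_series_sum:
  fixes b :: "nat \<Rightarrow> ('m::finite \<Rightarrow> nat) \<Rightarrow> complex^'s::finite"
  assumes d: "0 < \<delta>" and bA: "\<And>k. inA \<delta> (b k)" and bs: "(\<lambda>k. Anorm \<delta> (b k)) summable_on UNIV"
    and z: "supn z \<le> \<delta>"
  shows "evalA (series_sum b) z $ i = (\<Sum>\<^sub>\<infinity>k. evalA (b k) z $ i)"
proof -
  define F where "F \<beta> k = zpow z \<beta> * b k \<beta> $ i" for \<beta> k
  have F_le: "norm (F \<beta> k) \<le> supn (b k \<beta>) * \<delta> ^ deg \<beta>" for \<beta> k
  proof -
    have "norm (F \<beta> k) = norm (zpow z \<beta>) * norm (b k \<beta> $ i)" by (simp add: F_def norm_mult)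
    also have "\<dots> \<le> \<delta> ^ deg \<beta> * supn (b k \<beta>)"
      using d by (intro mult_mono) (auto simp: norm_zpow[OF z] supn_ge)
    finally show ?thesis by (simp add: mult.commute)
  qed
  have F: "(\<lambda>(\<beta>,k). F \<beta> k) summable_on UNIV \<times> UNIV"
  proof (rule abs_summable_summable)
    show "(\<lambda>x. norm ((\<lambda>(\<beta>,k). F \<beta> k) x)) summable_on UNIV \<times> UNIV"
      by (rule summable_on_comparison_test[OF coeff_series_double_summable[OF _ bA bs]])
         (use d F_le in \<open>auto split: prod.splits\<close>)
  qed
  have "evalA (series_sum b) z $ i = (\<Sum>\<^sub>\<infinity>\<beta>. zpow z \<beta> * coord (series_sum b) i \<beta>)"
    using coeff_series_converges(1)[OF d bA bs] z by (intro infsumI[symmetric] has_sum_evalA_coord)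
  also have "\<dots> = (\<Sum>\<^sub>\<infinity>\<beta>. \<Sum>\<^sub>\<infinity>k. F \<beta> k)"
  proof (rule infsum_cong)
    fix \<beta>
    have "((\<lambda>k. b k \<beta> $ i) has_sum series_sum b \<beta> $ i) UNIV"
      using has_sum_infsum[OF coeff_series_summable(2)[OF d bA bs]]
      unfolding has_sum_vec series_sum_def by blast
    then show "zpow z \<beta> * coord (series_sum b) i \<beta> = (\<Sum>\<^sub>\<infinity>k. F \<beta> k)"
      by (simp add: F_def coord_def infsumI infsum_cmult_right')
  qed
  also have "\<dots> = (\<Sum>\<^sub>\<infinity>k. \<Sum>\<^sub>\<infinity>\<beta>. F \<beta> k)" by (rule infsum_swap_banach[OF F])
  also have "\<dots> = (\<Sum>\<^sub>\<infinity>k. evalA (b k) z $ i)"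
    by (rule infsum_cong) (use infsumI[OF has_sum_evalA_coord[OF bA z]] in \<open>simp add: F_def coord_def\<close>)
  finally show ?thesis .
qed

lemma composition_series:
  fixes f :: "('l::finite \<Rightarrow> nat) \<Rightarrow> complex^'d::finite" and g :: "('m::finite \<Rightarrow> nat) \<Rightarrow> complex^'l"
  assumes \<rho>: "0 < \<rho>" and \<delta>: "0 < \<delta>" and f: "inA \<rho> f" and g: "inA \<delta> g" and gn: "Anorm \<delta> g \<le> \<rho>"
  defines "b \<equiv> \<lambda>k. comp_op f k (replicate k g)"
  shows "inA \<delta> (series_sum b)"
    "\<And>z. supn z \<le> \<delta> \<Longrightarrow> evalA (series_sum b) z = evalA f (evalA g z)"
    "(\<lambda>n. Anorm \<delta> (series_sum b - (\<Sum>k<n. b k))) \<longlonglongrightarrow> 0"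
proof -
  have bA: "inA \<delta> (b k)" for k unfolding b_def by (rule comp_op_bound(1)) (use \<delta> g in auto)
  have b_le: "Anorm \<delta> (b k) \<le> deg_norm f k * \<rho> ^ k" for k
  proof -
    have "Anorm \<delta> (b k) \<le> deg_norm f k * Anorm \<delta> g ^ k"
      unfolding b_def using comp_op_bound(2)[of \<delta> "replicate k g" k f] \<delta> g by simp
    also have "\<dots> \<le> deg_norm f k * \<rho> ^ k"
      using \<delta> gn by (intro mult_left_mono power_mono deg_norm_nonneg Anorm_nonneg) auto
    finally show ?thesis .
  qed
  have bs: "(\<lambda>k. Anorm \<delta> (b k)) summable_on UNIV"
    by (rule summable_on_comparison_test[OF has_sum_imp_summable[OF has_sum_deg_norm[OF f]]])
       (use b_le Anorm_nonneg[of \<delta>] \<delta> in \<open>auto simp: less_imp_le\<close>)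
  show "inA \<delta> (series_sum b)" "(\<lambda>n. Anorm \<delta> (series_sum b - (\<Sum>k<n. b k))) \<longlonglongrightarrow> 0"
    by (rule coeff_series_converges[OF \<delta> bA bs])+
  fix z :: "complex^'m" assume z: "supn z \<le> \<delta>"
  have w: "supn (evalA g z) \<le> \<rho>" using supn_evalA_le[OF g z] gn by linarith
  show "evalA (series_sum b) z = evalA f (evalA g z)"
  proof (rule vec_eq_iff[THEN iffD2, rule_format])
    fix i
    have "evalA (series_sum b) z $ i = (\<Sum>\<^sub>\<infinity>k. evalA (b k) z $ i)"
      by (rule evalA_series_sum[OF \<delta> bA bs z])
    also have "\<dots> = (\<Sum>\<^sub>\<infinity>k. \<Sum>\<alpha>\<in>of_deg k. zpow (evalA g z) \<alpha> * coord f i \<alpha>)"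
      unfolding b_def evalA_comp_op_diagonal[OF z g] by (simp add: coord_def)
    also have "\<dots> = evalA f (evalA g z) $ i"
      by (rule infsumI[OF has_sum_by_degree[OF has_sum_evalA_coord[OF f w]]])
    finally show "evalA (series_sum b) z $ i = evalA f (evalA g z) $ i" .
  qed
qed

lemma mlnorm_series_bound:
  fixes f :: "('l::finite \<Rightarrow> nat) \<Rightarrow> complex^'d::finite"
  assumes \<rho>: "0 < \<rho>" and \<delta>: "0 < \<delta>" and f: "inA \<rho> f"
  defines "a \<equiv> \<lambda>k. mlnorm \<delta> k (comp_op f k :: (('m::finite \<Rightarrow> nat) \<Rightarrow> complex^'l) list \<Rightarrow> _) * \<rho> ^ k"
  shows "summable a" "(\<Sum>k. a k) \<le> Anorm \<rho> f"
proof -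
  have sums: "(\<lambda>k. deg_norm f k * \<rho> ^ k) sums Anorm \<rho> f"
    by (rule has_sum_imp_sums[OF has_sum_deg_norm[OF f]])
  have le: "a k \<le> deg_norm f k * \<rho> ^ k" for k
    unfolding a_def by (rule mult_right_mono[OF mlnorm_comp_op(2)]) (use \<delta> \<rho> in simp_all)
  have ge: "0 \<le> a k" for k
    unfolding a_def by (rule mult_nonneg_nonneg[OF mlnorm_comp_op(1)]) (use \<delta> \<rho> in simp_all)
  show "summable a"
    by (rule summable_comparison_test'[OF sums_summable[OF sums]]) (use le ge in simp)
  then show "(\<Sum>k. a k) \<le> Anorm \<rho> f"
    using suminf_le[OF le _ sums_summable[OF sums]] sums_unique[OF sums] by simp
qed

theorem mainTheorem4:
  fixes \<rho> \<delta> :: real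
    and f :: "('l::finite \<Rightarrow> nat) \<Rightarrow> complex^'d::finite"
  assumes "\<rho> > 0" and "\<delta> > 0" and "inA \<rho> f"
  shows "(\<forall>g :: ('m::finite \<Rightarrow> nat) \<Rightarrow> complex^'l. inA \<delta> g \<and> Anorm \<delta> g \<le> \<rho> \<longrightarrow>
            (\<forall>z. supn z \<le> \<delta> \<longrightarrow> supn (evalA g z) \<le> \<rho>) \<and>
            (\<exists>h. inA \<delta> h \<and> (\<forall>z. supn z \<le> \<delta> \<longrightarrow> evalA h z = evalA f (evalA g z))))
       \<and> (\<exists>B :: nat \<Rightarrow> (('m \<Rightarrow> nat) \<Rightarrow> complex^'l) list \<Rightarrow> (('m \<Rightarrow> nat) \<Rightarrow> complex^'d).
            (\<forall>k. sym_mlin \<delta> k (B k)) \<and>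
            summable (\<lambda>k. mlnorm \<delta> k (B k) * \<rho> ^ k) \<and>
            (\<Sum>k. mlnorm \<delta> k (B k) * \<rho> ^ k) \<le> Anorm \<rho> f \<and>
            (\<forall>g. inA \<delta> g \<and> Anorm \<delta> g \<le> \<rho> \<longrightarrow>
               (\<exists>h. inA \<delta> h \<and> (\<forall>z. supn z \<le> \<delta> \<longrightarrow> evalA h z = evalA f (evalA g z)) \<and>
                    (\<lambda>n. Anorm \<delta> (h - (\<Sum>k<n. B k (replicate k g)))) \<longlonglongrightarrow> 0)))"
proof (intro conjI allI impI exI[of _ "comp_op f"])
  fix g :: "('m \<Rightarrow> nat) \<Rightarrow> complex^'l" and z :: "complex^'m"
  assume "inA \<delta> g \<and> Anorm \<delta> g \<le> \<rho>" and z: "supn z \<le> \<delta>"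
  then show "supn (evalA g z) \<le> \<rho>" using supn_evalA_le[OF _ z, of g] by linarith
next
  fix g :: "('m \<Rightarrow> nat) \<Rightarrow> complex^'l" assume "inA \<delta> g \<and> Anorm \<delta> g \<le> \<rho>"
  then show "\<exists>h. inA \<delta> h \<and> (\<forall>z. supn z \<le> \<delta> \<longrightarrow> evalA h z = evalA f (evalA g z))"
    and "\<exists>h. inA \<delta> h \<and> (\<forall>z. supn z \<le> \<delta> \<longrightarrow> evalA h z = evalA f (evalA g z)) \<and>
      (\<lambda>n. Anorm \<delta> (h - (\<Sum>k<n. comp_op f k (replicate k g)))) \<longlonglongrightarrow> 0"
    using composition_series[OF assms, of g] by blast+
next
  show "sym_mlin \<delta> k (comp_op f k :: (('m \<Rightarrow> nat) \<Rightarrow> complex^'l) list \<Rightarrow> _)" for k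
    by (rule comp_op_sym_mlin) (use assms(2) in simp)
  show "summable (\<lambda>k. mlnorm \<delta> k (comp_op f k :: (('m \<Rightarrow> nat) \<Rightarrow> complex^'l) list \<Rightarrow> _) * \<rho> ^ k)"
    and "(\<Sum>k. mlnorm \<delta> k (comp_op f k :: (('m \<Rightarrow> nat) \<Rightarrow> complex^'l) list \<Rightarrow> _) * \<rho> ^ k) \<le> Anorm \<rho> f"
    by (rule mlnorm_series_bound[OF assms])+
qed

end
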